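(* Let $\pi$ be a model with data space $Y$ and parameter space $\Theta$ and let $\phi=\pi_{\text{post}}$ be the correct posterior (as a posterior family). Then for every test quantity $f$, $\phi$ passes continuous SBC with respect to $f$, and for every $M\in\mathbb{N}$ it satisfies $\int_Y Q_{\phi,f}(i\mid y)\pi_{\text{marg}}(y)\,\mathrm{d}y=\frac{i+1}{M+1}$ for all $i\in\{0,\dots,M-1\}$, i.e. it passes $M$-sample SBC with respect to $f$.
   Context: Model $\pi$: prior density $\pi_{\text{prior}}(\theta)$ on $\Theta$, observation density $\pi_{\text{obs}}(y\mid\theta)$ on $Y$, $\pi_{\text{marg}}(y)=\int_\Theta\pi_{\text{obs}}(y\mid\theta)\pi_{\text{prior}}(\theta)\,\mathrm{d}\theta$, $\pi_{\text{post}}(\theta\mid y)=\pi_{\text{obs}}(y\mid\theta)\pi_{\text{prior}}(\theta)/\pi_{\text{marg}}(y)$. A posterior family is $\phi:\Theta\times Y\to\mathbb{R}^+$ with $\int_\Theta\phi(\theta\mid y)\,\mathrm{d}\theta=1$ for all $y$; a test quantity is a measurable $f:\Theta\times Y\to\mathbb{R}$. Sample quantities: for $M\in\mathbb{N}$, $\theta_1,\dots,\theta_M$ i.i.d. from $\phi(\cdot\mid y)$, $N^{\mathtt{less}}=\sum_m\mathbb{I}[f(\theta_m,y)<f(\tilde\theta,y)]$, $N^{\mathtt{equals}}=\sum_m\mathbb{I}[f(\theta_m,y)=f(\tilde\theta,y)]$, $K$ uniform on $\{0,\dots,N^{\mathtt{equals}}\}$, $N^{\mathtt{total}}=N^{\mathtt{less}}+K$;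 $R_{\phi,f}(i\mid\tilde\theta,y)=\Pr(N^{\mathtt{total}}\le i)$; $Q_{\phi,f}(i\mid y)=\int_\Theta\pi_{\text{post}}(\tilde\theta\mid y)R_{\phi,f}(i\mid\tilde\theta,y)\,\mathrm{d}\tilde\theta$. Continuous quantities: $C_{\phi,f}(s\mid y)=\int_\Theta\mathbb{I}[f(\theta,y)\le s]\phi(\theta\mid y)\,\mathrm{d}\theta$, $D_{\phi,f}(s\mid y)=\int_\Theta\mathbb{I}[f(\theta,y)=s]\phi(\theta\mid y)\,\mathrm{d}\theta$; with $U\sim\mathrm{uniform}[0,1]$, $r_{\phi,f}(x\mid\tilde\theta,y)=\Pr\big(C_{\phi,f}(f(\tilde\theta,y)\mid y)-U\,D_{\phi,f}(f(\tilde\theta,y)\mid y)\le x\big)$, $q_{\phi,f}(x\mid y)=\int_\Theta\pi_{\text{post}}(\tilde\theta\mid y)r_{\phi,f}(x\mid\tilde\theta,y)\,\mathrm{d}\tilde\theta$. $\phi$ passes continuous SBC w.r.t. $f$ if $\int_Yq_{\phi,f}(x\mid y)\pi_{\text{marg}}(y)\,\mathrm{d}y=x$ for all $x\in[0,1]$. *)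

theory Defs
  imports "HOL-Probability.Probability"
begin

text \<open>Model: parameter space = space MT (base measure MT, "d theta"), data space = space MY
  (base measure MY, "d y"); prior density prior, observation density obs y theta.\<close>

definition marg :: "'p measure \<Rightarrow> ('p \<Rightarrow> real) \<Rightarrow> ('y \<Rightarrow> 'p \<Rightarrow> real) \<Rightarrow> 'y \<Rightarrow> real" where
  "marg MT prior obs y = (\<integral>\<theta>. obs y \<theta> * prior \<theta> \<partial>MT)"

definition post :: "'p measure \<Rightarrow> ('p \<Rightarrow> real) \<Rightarrow> ('y \<Rightarrow> 'p \<Rightarrow> real) \<Rightarrow> 'p \<Rightarrow> 'y \<Rightarrow> real" where
  "post MT prior obs \<theta> y = obs y \<theta> * prior \<theta> / marg MT prior obs y"

definition sample_measure :: "'p measure \<Rightarrow> ('p \<Rightarrow> 'y \<Rightarrow> real) \<Rightarrow> nat \<Rightarrow> 'y \<Rightarrow> (nat \<Rightarrow> 'p) measure" where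
  "sample_measure MT \<phi> M y = PiM {..<M} (\<lambda>_. density MT (\<lambda>\<theta>. ennreal (\<phi> \<theta> y)))"

definition N_less :: "('p \<Rightarrow> 'y \<Rightarrow> real) \<Rightarrow> nat \<Rightarrow> 'p \<Rightarrow> 'y \<Rightarrow> (nat \<Rightarrow> 'p) \<Rightarrow> nat" where
  "N_less f M \<theta>t y \<omega> = card {m \<in> {..<M}. f (\<omega> m) y < f \<theta>t y}"

definition N_equals :: "('p \<Rightarrow> 'y \<Rightarrow> real) \<Rightarrow> nat \<Rightarrow> 'p \<Rightarrow> 'y \<Rightarrow> (nat \<Rightarrow> 'p) \<Rightarrow> nat" where
  "N_equals f M \<theta>t y \<omega> = card {m \<in> {..<M}. f (\<omega> m) y = f \<theta>t y}"

text \<open>R(i | theta~, y) = Pr(N_total <= i), N_total = N_less + K, K uniform on {0..N_equals}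
  given the samples; i.e. the expectation over the samples of the conditional probability.\<close>
definition sbc_R :: "'p measure \<Rightarrow> ('p \<Rightarrow> 'y \<Rightarrow> real) \<Rightarrow> ('p \<Rightarrow> 'y \<Rightarrow> real) \<Rightarrow> nat \<Rightarrow> nat \<Rightarrow> 'p \<Rightarrow> 'y \<Rightarrow> real" where
  "sbc_R MT \<phi> f M i \<theta>t y =
     (\<integral>\<omega>. measure_pmf.prob (pmf_of_set {0..N_equals f M \<theta>t y \<omega>})
              {k. N_less f M \<theta>t y \<omega> + k \<le> i} \<partial>(sample_measure MT \<phi> M y))"

definition sbc_Q :: "'p measure \<Rightarrow> ('p \<Rightarrow> real) \<Rightarrow> ('y \<Rightarrow> 'p \<Rightarrow> real) \<Rightarrow> ('p \<Rightarrow> 'y \<Rightarrow> real) \<Rightarrow> ('p \<Rightarrow> 'y \<Rightarrow> real) \<Rightarrow> nat \<Rightarrow> nat \<Rightarrow> 'y \<Rightarrow> real" where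
  "sbc_Q MT prior obs \<phi> f M i y = (\<integral>\<theta>t. post MT prior obs \<theta>t y * sbc_R MT \<phi> f M i \<theta>t y \<partial>MT)"

definition passes_M_SBC :: "'p measure \<Rightarrow> 'y measure \<Rightarrow> ('p \<Rightarrow> real) \<Rightarrow> ('y \<Rightarrow> 'p \<Rightarrow> real) \<Rightarrow> ('p \<Rightarrow> 'y \<Rightarrow> real) \<Rightarrow> ('p \<Rightarrow> 'y \<Rightarrow> real) \<Rightarrow> nat \<Rightarrow> bool" where
  "passes_M_SBC MT MY prior obs \<phi> f M \<longleftrightarrow>
     (\<forall>i<M. (\<integral>y. sbc_Q MT prior obs \<phi> f M i y * marg MT prior obs y \<partial>MY) = real (i + 1) / real (M + 1))"

definition cont_C :: "'p measure \<Rightarrow> ('p \<Rightarrow> 'y \<Rightarrow> real) \<Rightarrow> ('p \<Rightarrow> 'y \<Rightarrow> real) \<Rightarrow> real \<Rightarrow> 'y \<Rightarrow> real" where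
  "cont_C MT \<phi> f s y = (\<integral>\<theta>. indicator {\<theta>. f \<theta> y \<le> s} \<theta> * \<phi> \<theta> y \<partial>MT)"

definition cont_D :: "'p measure \<Rightarrow> ('p \<Rightarrow> 'y \<Rightarrow> real) \<Rightarrow> ('p \<Rightarrow> 'y \<Rightarrow> real) \<Rightarrow> real \<Rightarrow> 'y \<Rightarrow> real" where
  "cont_D MT \<phi> f s y = (\<integral>\<theta>. indicator {\<theta>. f \<theta> y = s} \<theta> * \<phi> \<theta> y \<partial>MT)"

definition cont_r :: "'p measure \<Rightarrow> ('p \<Rightarrow> 'y \<Rightarrow> real) \<Rightarrow> ('p \<Rightarrow> 'y \<Rightarrow> real) \<Rightarrow> real \<Rightarrow> 'p \<Rightarrow> 'y \<Rightarrow> real" where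
  "cont_r MT \<phi> f x \<theta>t y =
     measure (uniform_measure lborel {0..1::real})
       {u. cont_C MT \<phi> f (f \<theta>t y) y - u * cont_D MT \<phi> f (f \<theta>t y) y \<le> x}"

definition cont_q :: "'p measure \<Rightarrow> ('p \<Rightarrow> real) \<Rightarrow> ('y \<Rightarrow> 'p \<Rightarrow> real) \<Rightarrow> ('p \<Rightarrow> 'y \<Rightarrow> real) \<Rightarrow> ('p \<Rightarrow> 'y \<Rightarrow> real) \<Rightarrow> real \<Rightarrow> 'y \<Rightarrow> real" where
  "cont_q MT prior obs \<phi> f x y = (\<integral>\<theta>t. post MT prior obs \<theta>t y * cont_r MT \<phi> f x \<theta>t y \<partial>MT)"

definition passes_cont_SBC :: "'p measure \<Rightarrow> 'y measure \<Rightarrow> ('p \<Rightarrow> real) \<Rightarrow> ('y \<Rightarrow> 'p \<Rightarrow> real) \<Rightarrow> ('p \<Rightarrow> 'y \<Rightarrow> real) \<Rightarrow> ('p \<Rightarrow> 'y \<Rightarrow> real) \<Rightarrow> bool" where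
  "passes_cont_SBC MT MY prior obs \<phi> f \<longleftrightarrow>
     (\<forall>x\<in>{0..1}. (\<integral>y. cont_q MT prior obs \<phi> f x y * marg MT prior obs y \<partial>MY) = x)"

end

(*
  The reference parameter and the M posterior draws are M + 1 i.i.d. draws from
  the same posterior, so by exchangeability the probability that the reference draw has
  (tie-randomised) rank at most i is the same for all M + 1 positions. Summed over the positions
  these probabilities give i + 1, because the draws tied at a value v share the block of ranks
  of v evenly; hence each of them is (i + 1) / (M + 1).
  The continuous statement is the randomised probability integral transform: if s has law mu
  with CDF F and U is uniform, then F(s) - U mu{s} is uniform on [0, 1].
  Both identities hold for every y of nonzero marginal density, and integrating against the
  marginal, a probability density by Tonelli, keeps the constants.
*)

theory Submission
  imports Defs
begin

definition randomized_rank_cdf :: "nat \<Rightarrow> nat \<Rightarrow> nat \<Rightarrow> real" where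
  "randomized_rank_cdf l e i = measure_pmf.prob (pmf_of_set {0..e}) {k. l + k \<le> i}"

text \<open>The count of ties includes j itself, hence the \<open>- 1\<close>.\<close>
definition rank_cdf :: "'i set \<Rightarrow> ('i \<Rightarrow> 'a::linorder) \<Rightarrow> 'i \<Rightarrow> nat \<Rightarrow> real" where
  "rank_cdf I x j i = randomized_rank_cdf (card {k\<in>I. x k < x j}) (card {k\<in>I. x k = x j} - 1) i"

text \<open>The 0-based ranks occupied by the entries equal to \<open>v\<close>.\<close>
definition rank_block :: "'i set \<Rightarrow> ('i \<Rightarrow> 'a::linorder) \<Rightarrow> 'a \<Rightarrow> nat set" where
  "rank_block I x v = {card {k\<in>I. x k < v} ..< card {k\<in>I. x k \<le> v}}"

lemma abs_randomized_rank_cdf_le_1: "\<bar>randomized_rank_cdf l e i\<bar> \<le> 1"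
  unfolding randomized_rank_cdf_def by simp

lemma randomized_rank_cdf_eq_card:
  "randomized_rank_cdf l e i = card ({l..l + e} \<inter> {..i}) / (e + 1)"
proof -
  have "{l..l + e} \<inter> {..i} = (+) l ` ({0..e} \<inter> {k. l + k \<le> i})"
  proof (intro set_eqI iffI)
    fix t assume "t \<in> {l..l + e} \<inter> {..i}"
    then have "t - l \<in> {0..e} \<inter> {k. l + k \<le> i}" "t = l + (t - l)" by auto
    then show "t \<in> (+) l ` ({0..e} \<inter> {k. l + k \<le> i})" by blast
  qed auto
  then have "card ({l..l + e} \<inter> {..i}) = card ({0..e} \<inter> {k. l + k \<le> i})"
    by (simp add: card_image)
  then show ?thesis
    unfolding randomized_rank_cdf_def by (subst measure_pmf_of_set) auto
qed

lemma abs_rank_cdf_le_1: "\<bar>rank_cdf I x j i\<bar> \<le> 1"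
  unfolding rank_cdf_def by (rule abs_randomized_rank_cdf_le_1)

lemma card_less_add_card_eq:
  fixes x :: "'i \<Rightarrow> 'a::linorder"
  assumes "finite I"
  shows "card {k\<in>I. x k < v} + card {k\<in>I. x k = v} = card {k\<in>I. x k \<le> v}"
proof -
  have "{k\<in>I. x k \<le> v} = {k\<in>I. x k < v} \<union> {k\<in>I. x k = v}" by auto
  moreover have "card ({k\<in>I. x k < v} \<union> {k\<in>I. x k = v}) = card {k\<in>I. x k < v} + card {k\<in>I. x k = v}"
    using assms by (intro card_Un_disjoint) auto
  ultimately show ?thesis by simp
qed

lemma finite_rank_block [simp]: "finite (rank_block I x v)"
  unfolding rank_block_def by simp

lemma card_rank_block:
  "finite I \<Longrightarrow> card (rank_block I x v) = card {k\<in>I. x k = v}"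
  unfolding rank_block_def by (simp flip: card_less_add_card_eq)

lemma rank_block_subset:
  assumes "finite I"
  shows "rank_block I x v \<subseteq> {..<card I}"
proof -
  have "card {k\<in>I. x k \<le> v} \<le> card I"
    using assms by (intro card_mono) auto
  then show ?thesis unfolding rank_block_def by auto
qed

lemma rank_blocks_disjoint:
  assumes I: "finite I" and "v \<noteq> w"
  shows "rank_block I x v \<inter> rank_block I x w = {}"
proof -
  have "rank_block I x v \<inter> rank_block I x w = {}" if "v < w" for v w
  proof -
    have "card {k\<in>I. x k \<le> v} \<le> card {k\<in>I. x k < w}"
      using I that by (intro card_mono) auto
    then show ?thesis unfolding rank_block_def by auto
  qed
  then show ?thesis
    using \<open>v \<noteq> w\<close> by (metis inf_commute neq_iff)
qed

lemma Union_rank_blocks: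
  assumes I: "finite I"
  shows "(\<Union>v\<in>x ` I. rank_block I x v) = {..<card I}"
proof (rule card_subset_eq)
  have "card (\<Union>v\<in>x ` I. rank_block I x v) = (\<Sum>v\<in>x ` I. card {k\<in>I. x k = v})"
    using I by (subst card_UN_disjoint) (auto simp: card_rank_block rank_blocks_disjoint)
  also have "\<dots> = card I"
    using sum.group[where S=I and T="x ` I" and g=x and h="\<lambda>_. 1::nat"] I by simp
  finally show "card (\<Union>v\<in>x ` I. rank_block I x v) = card {..<card I}" by simp
qed (use rank_block_subset[OF I] in auto)

lemma rank_cdf_eq_card_rank_block:
  assumes I: "finite I" and j: "j \<in> I"
  shows "rank_cdf I x j i = card (rank_block I x (x j) \<inter> {..i}) / card {k\<in>I. x k = x j}"
proof -
  have "card {k\<in>I. x k = x j} > 0"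
    using I j by (subst card_gt_0_iff) auto
  then show ?thesis
    using card_less_add_card_eq[OF I, of x "x j"]
    unfolding rank_cdf_def randomized_rank_cdf_eq_card rank_block_def
    by (simp add: atLeastLessThanSuc_atLeastAtMost[symmetric])
qed

lemma sum_rank_cdf:
  assumes I: "finite I" and i: "i < card I"
  shows "(\<Sum>j\<in>I. rank_cdf I x j i) = real i + 1"
proof -
  \<comment> \<open>group by value: the entries tied at \<open>v\<close> share the rank block of \<open>v\<close> evenly\<close>
  have "(\<Sum>j\<in>I. rank_cdf I x j i)
      = (\<Sum>v\<in>x ` I. \<Sum>j | j \<in> I \<and> x j = v. card (rank_block I x v \<inter> {..i}) / card {k\<in>I. x k = v})"
    using I by (subst sum.image_gen) (auto simp: rank_cdf_eq_card_rank_block intro!: sum.cong)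
  also have "\<dots> = (\<Sum>v\<in>x ` I. real (card (rank_block I x v \<inter> {..i})))"
  proof (intro sum.cong refl)
    fix v assume "v \<in> x ` I"
    then have "card {k\<in>I. x k = v} \<noteq> 0" using I by auto
    then show "(\<Sum>j | j \<in> I \<and> x j = v. card (rank_block I x v \<inter> {..i}) / card {k\<in>I. x k = v})
        = card (rank_block I x v \<inter> {..i})" by simp
  qed
  also have "\<dots> = card (\<Union>v\<in>x ` I. rank_block I x v \<inter> {..i})"
  proof -
    have "card (\<Union>v\<in>x ` I. rank_block I x v \<inter> {..i}) = (\<Sum>v\<in>x ` I. card (rank_block I x v \<inter> {..i}))"
      by (intro card_UN_disjoint) (simp add: I, simp, use rank_blocks_disjoint[OF I, of _ _ x] in blast)
    then show ?thesis by simp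
  qed
  also have "\<dots> = card ({..<card I} \<inter> {..i})"
    by (simp flip: Union_rank_blocks[OF I, of x] Int_UN_distrib2)
  also have "{..<card I} \<inter> {..i} = {..i}" using i by auto
  finally show ?thesis by simp
qed

lemma rank_cdf_cong:
  "j \<in> I \<Longrightarrow> (\<And>k. k \<in> I \<Longrightarrow> x k = y k) \<Longrightarrow> rank_cdf I x j i = rank_cdf I y j i"
  unfolding rank_cdf_def by (intro arg_cong2[where f="\<lambda>l e. randomized_rank_cdf l (e - 1) i"] arg_cong[where f=card]) auto

lemma card_filter_bij_betw:
  assumes "bij_betw \<sigma> I I"
  shows "card {k\<in>I. P (\<sigma> k)} = card {k\<in>I. P k}"
proof (rule bij_betw_same_card)
  show "bij_betw \<sigma> {k\<in>I. P (\<sigma> k)} {k\<in>I. P k}"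
    using assms unfolding bij_betw_def by (auto simp: inj_on_def image_iff)
qed

lemma rank_cdf_comp_bij_betw:
  "bij_betw \<sigma> I I \<Longrightarrow> rank_cdf I (x \<circ> \<sigma>) j i = rank_cdf I x (\<sigma> j) i"
  unfolding rank_cdf_def o_def
  by (simp add: card_filter_bij_betw[where P="\<lambda>k. x k < x (\<sigma> j)"] card_filter_bij_betw[where P="\<lambda>k. x k = x (\<sigma> j)"])

lemma measurable_card_filter:
  assumes "finite K" "\<And>k. k \<in> K \<Longrightarrow> {z \<in> space N. Q k z} \<in> sets N"
  shows "(\<lambda>z. card {k\<in>K. Q k z}) \<in> N \<rightarrow>\<^sub>M count_space UNIV"
proof -
  have card_eq: "(\<lambda>z. card {k\<in>K. Q k z}) = (\<lambda>z. \<Sum>k\<in>K. if Q k z then 1 else 0::nat)"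
    using assms(1) by (simp add: fun_eq_iff sum.If_cases Int_def)
  have "(\<lambda>z. \<Sum>k\<in>K. if Q k z then 1 else 0::nat) \<in> borel_measurable N"
    using assms by (intro borel_measurable_sum) (auto intro!: measurable_If_set)
  then show ?thesis
    unfolding card_eq using measurable_cong_sets[OF refl sets_borel_eq_count_space] by blast
qed

lemma borel_measurable_rank_cdf:
  fixes X :: "'i \<Rightarrow> 'a \<Rightarrow> 'b::{linorder_topology, second_countable_topology}"
  assumes I: "finite I" and j: "j \<in> I" and X: "\<And>k. k \<in> I \<Longrightarrow> X k \<in> borel_measurable N"
  shows "(\<lambda>z. rank_cdf I (\<lambda>k. X k z) j i) \<in> borel_measurable N"
proof -
  have less: "(\<lambda>z. card {k\<in>I. X k z < X j z}) \<in> N \<rightarrow>\<^sub>M count_space UNIV"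
    using I X j by (intro measurable_card_filter borel_measurable_less)
  have eq: "(\<lambda>z. card {k\<in>I. X k z = X j z}) \<in> N \<rightarrow>\<^sub>M count_space UNIV"
    using I X j by (intro measurable_card_filter borel_measurable_eq)
  have "(\<lambda>z. (card {k\<in>I. X k z < X j z}, card {k\<in>I. X k z = X j z} - 1))
      \<in> N \<rightarrow>\<^sub>M count_space UNIV \<Otimes>\<^sub>M count_space UNIV"
    by (intro measurable_Pair less measurable_compose[OF eq]) simp
  from measurable_compose[OF this, of "\<lambda>(l, e). randomized_rank_cdf l e i" borel]
  show ?thesis unfolding rank_cdf_def by (simp add: pair_measure_countable)
qed

lemma (in prob_space) integral_rank_cdf_PiM_eq:
  fixes I :: "'i set" and g :: "'a \<Rightarrow> 'b::{linorder_topology, second_countable_topology}"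
  assumes I: "finite I" and j: "j \<in> I" "j' \<in> I" and g[measurable]: "g \<in> borel_measurable M"
  shows "(\<integral>\<omega>. rank_cdf I (\<lambda>k. g (\<omega> k)) j i \<partial>PiM I (\<lambda>_. M))
       = (\<integral>\<omega>. rank_cdf I (\<lambda>k. g (\<omega> k)) j' i \<partial>PiM I (\<lambda>_. M))"
proof -
  \<comment> \<open>exchangeability: swapping the coordinates \<open>j\<close> and \<open>j'\<close> preserves the product measure\<close>
  define \<sigma> where "\<sigma> = Transposition.transpose j j'"
  have \<sigma>: "bij_betw \<sigma> I I"
    unfolding \<sigma>_def using j by simp
  define T where "T \<omega> = (\<lambda>n\<in>I. \<omega> (\<sigma> n))" for \<omega> :: "'i \<Rightarrow> 'a"
  have T: "T \<in> PiM I (\<lambda>_. M) \<rightarrow>\<^sub>M PiM I (\<lambda>_. M)"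
    unfolding T_def using \<sigma> by (intro measurable_restrict measurable_component_singleton) (auto simp: bij_betw_def)
  have "distr (PiM I (\<lambda>_. M)) (PiM I (\<lambda>_. M)) T = PiM I (\<lambda>_. M)"
    unfolding T_def using distr_PiM_reindex[of I "\<lambda>_. M" \<sigma> I] prob_space_axioms
      bij_betw_imp_inj_on[OF \<sigma>] bij_betw_imp_funcset[OF \<sigma>] by simp
  then have "(\<integral>\<omega>. rank_cdf I (\<lambda>k. g (\<omega> k)) j' i \<partial>PiM I (\<lambda>_. M))
      = (\<integral>\<omega>. rank_cdf I (\<lambda>k. g (T \<omega> k)) j' i \<partial>PiM I (\<lambda>_. M))"
    using integral_distr[OF T borel_measurable_rank_cdf[OF I j(2)], of "\<lambda>k \<omega>. g (\<omega> k)"]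
    by simp
  also have "\<dots> = (\<integral>\<omega>. rank_cdf I (\<lambda>k. g (\<omega> k)) j i \<partial>PiM I (\<lambda>_. M))"
  proof (rule Bochner_Integration.integral_cong[OF refl])
    fix \<omega>
    have "rank_cdf I (\<lambda>k. g (T \<omega> k)) j' i = rank_cdf I ((\<lambda>k. g (\<omega> k)) \<circ> \<sigma>) j' i"
      using j by (intro rank_cdf_cong) (auto simp: T_def)
    also have "\<dots> = rank_cdf I (\<lambda>k. g (\<omega> k)) j i"
      using \<sigma> by (simp add: rank_cdf_comp_bij_betw \<sigma>_def)
    finally show "rank_cdf I (\<lambda>k. g (T \<omega> k)) j' i = rank_cdf I (\<lambda>k. g (\<omega> k)) j i" .
  qed
  finally show ?thesis ..
qed

lemma (in prob_space) integrable_rank_cdf_PiM: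
  fixes g :: "'a \<Rightarrow> 'b::{linorder_topology, second_countable_topology}"
  assumes I: "finite I" and j: "j \<in> I" and g[measurable]: "g \<in> borel_measurable M"
  shows "integrable (PiM I (\<lambda>_. M)) (\<lambda>\<omega>. rank_cdf I (\<lambda>k. g (\<omega> k)) j i)"
proof -
  interpret PiM: prob_space "PiM I (\<lambda>_. M)"
    by (rule prob_space_PiM) (rule prob_space_axioms)
  have "(\<lambda>\<omega>. rank_cdf I (\<lambda>k. g (\<omega> k)) j i) \<in> borel_measurable (PiM I (\<lambda>_. M))"
    using I j by (rule borel_measurable_rank_cdf) measurable
  then show ?thesis
    by (intro PiM.integrable_const_bound[where B=1] AE_I2) (simp_all add: abs_rank_cdf_le_1)
qed

lemma (in prob_space) integral_rank_cdf_PiM: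
  fixes g :: "'a \<Rightarrow> 'b::{linorder_topology, second_countable_topology}"
  assumes I: "finite I" and j: "j \<in> I" and i: "i < card I" and g[measurable]: "g \<in> borel_measurable M"
  shows "(\<integral>\<omega>. rank_cdf I (\<lambda>k. g (\<omega> k)) j i \<partial>PiM I (\<lambda>_. M)) = (real i + 1) / card I"
proof -
  interpret PiM: prob_space "PiM I (\<lambda>_. M)"
    by (rule prob_space_PiM) (rule prob_space_axioms)
  have "card I * (\<integral>\<omega>. rank_cdf I (\<lambda>k. g (\<omega> k)) j i \<partial>PiM I (\<lambda>_. M))
      = (\<Sum>j'\<in>I. \<integral>\<omega>. rank_cdf I (\<lambda>k. g (\<omega> k)) j i \<partial>PiM I (\<lambda>_. M))"
    by simp
  also have "\<dots> = (\<Sum>j'\<in>I. \<integral>\<omega>. rank_cdf I (\<lambda>k. g (\<omega> k)) j' i \<partial>PiM I (\<lambda>_. M))"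
    by (intro sum.cong refl integral_rank_cdf_PiM_eq[OF I j _ g])
  also have "\<dots> = (\<integral>\<omega>. (\<Sum>j'\<in>I. rank_cdf I (\<lambda>k. g (\<omega> k)) j' i) \<partial>PiM I (\<lambda>_. M))"
    using integrable_rank_cdf_PiM[OF I _ g] by (rule Bochner_Integration.integral_sum[symmetric])
  also have "\<dots> = real i + 1"
    using I i by (simp add: sum_rank_cdf PiM.prob_space)
  finally have "card I * (\<integral>\<omega>. rank_cdf I (\<lambda>k. g (\<omega> k)) j i \<partial>PiM I (\<lambda>_. M)) = real i + 1" .
  moreover have "card I \<noteq> 0"
    using I j by auto
  ultimately show ?thesis
    by (simp add: eq_divide_eq mult.commute)
qed

text \<open>The reference value \<open>t\<close> joins the \<open>n\<close> samples as entry \<open>n\<close>.\<close>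
lemma rank_cdf_fun_upd:
  fixes g :: "'a \<Rightarrow> 'b::linorder" and n :: nat
  shows "rank_cdf (insert n {..<n}) (\<lambda>k. g ((w(n := t)) k)) n i
    = randomized_rank_cdf (card {m\<in>{..<n}. g (w m) < g t}) (card {m\<in>{..<n}. g (w m) = g t}) i"
proof -
  have "{k\<in>insert n {..<n}. g ((w(n := t)) k) < g t} = {m\<in>{..<n}. g (w m) < g t}"
    "{k\<in>insert n {..<n}. g ((w(n := t)) k) = g t} = insert n {m\<in>{..<n}. g (w m) = g t}"
    by auto
  then show ?thesis unfolding rank_cdf_def by simp
qed

lemma borel_measurable_randomized_rank_cdf_samples:
  fixes g :: "'a \<Rightarrow> 'b::{linorder_topology, second_countable_topology}" and n :: nat
  assumes [measurable]: "g \<in> borel_measurable N"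
  shows "(\<lambda>(t, \<omega>). randomized_rank_cdf (card {m\<in>{..<n}. g (\<omega> m) < g t}) (card {m\<in>{..<n}. g (\<omega> m) = g t}) i)
    \<in> borel_measurable (N \<Otimes>\<^sub>M PiM {..<n} (\<lambda>_. N))"
proof -
  have "finite (insert n {..<n})" "n \<in> insert n {..<n}" by auto
  then have rank: "(\<lambda>w. rank_cdf (insert n {..<n}) (\<lambda>k. g (w k)) n i)
      \<in> borel_measurable (PiM (insert n {..<n}) (\<lambda>_. N))"
    by (rule borel_measurable_rank_cdf) measurable
  have upd: "(\<lambda>x. (snd x)(n := fst x)) \<in> N \<Otimes>\<^sub>M PiM {..<n} (\<lambda>_. N) \<rightarrow>\<^sub>M PiM (insert n {..<n}) (\<lambda>_. N)"
    using measurable_compose[OF measurable_pair_swap' measurable_add_dim] by (simp add: split_beta')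
  from measurable_compose[OF upd rank, unfolded rank_cdf_fun_upd] show ?thesis
    unfolding split_beta' .
qed

lemma (in prob_space) integral_randomized_rank_cdf_samples:
  fixes g :: "'a \<Rightarrow> 'b::{linorder_topology, second_countable_topology}"
  assumes i: "i < n" and g[measurable]: "g \<in> borel_measurable M"
  shows "(\<integral>t. (\<integral>\<omega>. randomized_rank_cdf (card {m\<in>{..<n}. g (\<omega> m) < g t})
      (card {m\<in>{..<n}. g (\<omega> m) = g t}) i \<partial>PiM {..<n} (\<lambda>_. M)) \<partial>M) = (real i + 1) / (n + 1)"
proof -
  define h where "h \<omega> = rank_cdf (insert n {..<n}) (\<lambda>k. g (\<omega> k)) n i" for \<omega>
  interpret PiM: prob_space "PiM {..<n} (\<lambda>_. M)"
    by (rule prob_space_PiM) (rule prob_space_axioms)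
  interpret Ms: product_prob_space "\<lambda>_::nat. M" ..
  interpret M_PiM: pair_prob_space M "PiM {..<n} (\<lambda>_. M)" ..
  have "(\<lambda>(t, w). h (w(n := t))) \<in> borel_measurable (M \<Otimes>\<^sub>M PiM {..<n} (\<lambda>_. M))"
    using borel_measurable_randomized_rank_cdf_samples[OF g, of n i] unfolding h_def rank_cdf_fun_upd .
  then have "integrable (M \<Otimes>\<^sub>M PiM {..<n} (\<lambda>_. M)) (\<lambda>(t, w). h (w(n := t)))"
    by (rule M_PiM.P.integrable_const_bound[where B=1, rotated]) (simp add: h_def abs_rank_cdf_le_1 split_beta')
  then have "(\<integral>t. (\<integral>w. h (w(n := t)) \<partial>PiM {..<n} (\<lambda>_. M)) \<partial>M)
      = (\<integral>w. (\<integral>t. h (w(n := t)) \<partial>M) \<partial>PiM {..<n} (\<lambda>_. M))"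
    by (rule M_PiM.Fubini_integral[symmetric])
  also have "\<dots> = (\<integral>w. h w \<partial>PiM (insert n {..<n}) (\<lambda>_. M))"
    unfolding h_def using integrable_rank_cdf_PiM[OF _ _ g, of "insert n {..<n}" n i]
    by (intro Ms.product_integral_insert[symmetric]) auto
  also have "\<dots> = (real i + 1) / (n + 1)"
    unfolding h_def using i by (subst integral_rank_cdf_PiM) auto
  finally show ?thesis by (simp only: h_def rank_cdf_fun_upd)
qed

text \<open>The CDF of the uniform distribution on \<open>[a, b]\<close>, a point mass at \<open>b\<close> if \<open>a = b\<close>.\<close>
definition interval_uniform_cdf :: "real \<Rightarrow> real \<Rightarrow> real \<Rightarrow> real" where
  "interval_uniform_cdf a b x = (if b \<le> x then 1 else if a < x then (x - a) / (b - a) else 0)"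

lemma borel_measurable_interval_uniform_cdf [measurable]:
  assumes [measurable]: "f \<in> borel_measurable N" "g \<in> borel_measurable N"
  shows "(\<lambda>z. interval_uniform_cdf (f z) (g z) x) \<in> borel_measurable N"
  unfolding interval_uniform_cdf_def by measurable

lemma measure_uniform_unit_interval_le:
  fixes c d x :: real
  assumes d: "0 \<le> d"
  shows "measure (uniform_measure lborel {0..1}) {u. c - u * d \<le> x} = interval_uniform_cdf (c - d) c x"
proof -
  have "{u. c - u * d \<le> x} \<in> sets lborel" by measurable
  then have "measure (uniform_measure lborel {0..1}) {u. c - u * d \<le> x}
      = measure lborel ({0..1} \<inter> {u. c - u * d \<le> x})"
    by (simp add: Int_commute)
  also have "\<dots> = interval_uniform_cdf (c - d) c x"
  proof (cases "d = 0")
    case True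
    then show ?thesis by (simp add: interval_uniform_cdf_def)
  next
    case False
    define t where "t = (c - x) / d"
    have "{u. c - u * d \<le> x} = {t..}"
      using d False by (auto simp: t_def field_simps)
    moreover have "measure lborel ({0..1} \<inter> {t..}) = (if t \<le> 0 then 1 else if t < 1 then 1 - t else 0)"
    proof -
      have "{0..1} \<inter> {t..} = {max 0 t..1}" by auto
      then show ?thesis by auto
    qed
    moreover have "c \<le> x \<longleftrightarrow> t \<le> 0" "c - d < x \<longleftrightarrow> t < 1" "1 - t = (x - (c - d)) / d"
      using d False by (auto simp: t_def field_simps)
    ultimately show ?thesis by (simp add: interval_uniform_cdf_def)
  qed
  finally show ?thesis .
qed

context real_distribution
begin

lemma cdf_eq_measure_lessThan_add: "cdf M s = measure M {..<s} + measure M {s}"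
  unfolding cdf_def ivl_disj_un(2)[symmetric] by (subst finite_measure_Union) auto

lemma borel_measurable_cdf [measurable]: "cdf M \<in> borel_measurable borel"
  by (rule borel_measurable_mono) (simp add: mono_def cdf_nondecreasing)

lemma borel_measurable_measure_lessThan [measurable]: "(\<lambda>s. measure M {..<s}) \<in> borel_measurable borel"
  by (rule borel_measurable_mono) (auto simp: mono_def intro!: finite_measure_mono)

lemma cdf_level_crossing:
  assumes "x < 1"
  obtains "\<forall>s. x < cdf M s" | a where "\<forall>s<a. cdf M s \<le> x" "\<forall>s>a. x < cdf M s"
proof -
  define A where "A = {s. x < cdf M s}"
  have up: "x < cdf M s" if "a \<in> A" "a \<le> s" for a s
    using that cdf_nondecreasing[of a s] unfolding A_def by auto
  have "eventually (\<lambda>s. x < cdf M s) at_top"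
    using order_tendstoD(1)[OF cdf_lim_at_top_prob assms] .
  then have "A \<noteq> {}" unfolding A_def by (auto simp: eventually_at_top_linorder)
  show thesis
  proof (cases "bdd_below A")
    case False
    then have "x < cdf M s" for s
      using up unfolding bdd_below_def by (meson not_le less_imp_le)
    then show thesis using that(1) by blast
  next
    case True
    have "cdf M s \<le> x" if "s < Inf A" for s
      using that cInf_lower[OF _ True, of s] unfolding A_def by force
    moreover have "x < cdf M s" if "Inf A < s" for s
      using that cInf_less_iff[OF \<open>A \<noteq> {}\<close> True] up by (meson less_imp_le)
    ultimately show thesis using that(2) by blast
  qed
qed

lemma measure_lessThan_le_crossing:
  assumes "\<forall>s<a. cdf M s \<le> x"
  shows "measure M {..<a} \<le> x"
  by (rule tendsto_upperbound[OF cdf_at_left]) (auto intro!: eventually_at_leftI[of "a - 1"] simp: assms)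

lemma crossing_le_cdf:
  assumes "\<forall>s>a. x < cdf M s"
  shows "x \<le> cdf M a"
proof (rule tendsto_lowerbound)
  show "(cdf M \<longlongrightarrow> cdf M a) (at_right a)"
    using cdf_is_right_cont[of a] by (simp add: continuous_within)
  show "eventually (\<lambda>s. x \<le> cdf M s) (at_right a)"
    by (rule eventually_at_rightI[of a "a + 1"]) (auto simp: assms less_imp_le)
qed simp

lemma integral_interval_uniform_cdf_crossing:
  assumes below: "\<forall>s<a. cdf M s \<le> x" and above: "\<forall>s>a. x < cdf M s"
  shows "(\<integral>s. interval_uniform_cdf (measure M {..<s}) (cdf M s) x \<partial>M) = x"
proof -
  define \<rho> where "\<rho> = interval_uniform_cdf (measure M {..<a}) (cdf M a) x"
  have lo: "measure M {..<a} \<le> x" and hi: "x \<le> cdf M a"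
    using measure_lessThan_le_crossing[OF below] crossing_le_cdf[OF above] .
  have pointwise: "interval_uniform_cdf (measure M {..<s}) (cdf M s) x
      = indicator {..<a} s + \<rho> * indicator {a} s" for s
  proof (cases s a rule: linorder_cases)
    case greater
    then have "cdf M a \<le> measure M {..<s}"
      unfolding cdf_def by (intro finite_measure_mono) auto
    then show ?thesis
      using greater above[rule_format, OF greater] hi by (simp add: interval_uniform_cdf_def)
  qed (use below in \<open>auto simp: interval_uniform_cdf_def \<rho>_def\<close>)
  have "(\<integral>s. interval_uniform_cdf (measure M {..<s}) (cdf M s) x \<partial>M)
      = measure M {..<a} + \<rho> * measure M {a}"
    unfolding pointwise
    using integrable_real_indicator[of "{..<a}" M] integrable_real_indicator[of "{a}" M]
    by (subst Bochner_Integration.integral_add) (auto simp: emeasure_eq_measure)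
  also have "\<dots> = x"
  proof (cases "measure M {..<a} < x \<and> x < cdf M a")
    case True
    then have "measure M {a} \<noteq> 0"
      using cdf_eq_measure_lessThan_add[of a] by simp
    then show ?thesis
      using True cdf_eq_measure_lessThan_add[of a] by (simp add: \<rho>_def interval_uniform_cdf_def)
  next
    case False
    then show ?thesis
      using lo hi cdf_eq_measure_lessThan_add[of a] by (auto simp: \<rho>_def interval_uniform_cdf_def)
  qed
  finally show ?thesis .
qed

lemma integral_interval_uniform_cdf:
  assumes "0 \<le> x" "x \<le> 1"
  shows "(\<integral>s. interval_uniform_cdf (measure M {..<s}) (cdf M s) x \<partial>M) = x"
proof (cases "x = 1")
  case True
  then have "interval_uniform_cdf (measure M {..<s}) (cdf M s) x = 1" for s
    using cdf_bounded_prob by (simp add: interval_uniform_cdf_def)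
  then show ?thesis using True prob_space space_eq_univ by simp
next
  case False
  with assms have "x < 1" by simp
  then show ?thesis
  proof (rule cdf_level_crossing)
    assume everywhere: "\<forall>s. x < cdf M s"
    have "x \<le> 0"
      by (rule tendsto_lowerbound[OF cdf_lim_at_bot]) (auto simp: everywhere less_imp_le)
    then have "x = 0" using assms by simp
    then have "interval_uniform_cdf (measure M {..<s}) (cdf M s) x = 0" for s
      using everywhere by (simp add: interval_uniform_cdf_def not_le not_less)
    then show ?thesis using \<open>x = 0\<close> by simp
  qed (rule integral_interval_uniform_cdf_crossing)
qed

end

definition prob_density :: "'a measure \<Rightarrow> ('a \<Rightarrow> real) \<Rightarrow> bool" where
  "prob_density N d \<longleftrightarrow> d \<in> borel_measurable N \<and> (\<forall>x\<in>space N. 0 \<le> d x) \<and> (\<integral>x. d x \<partial>N) = 1"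

lemma prob_space_density_prob_density:
  assumes "prob_density N d"
  shows "prob_space (density N (\<lambda>x. ennreal (d x)))"
proof (rule prob_spaceI)
  have d: "d \<in> borel_measurable N" "\<forall>x\<in>space N. 0 \<le> d x" "(\<integral>x. d x \<partial>N) = 1"
    using assms unfolding prob_density_def by auto
  then have "integrable N d"
    using not_integrable_integral_eq by force
  have "emeasure (density N (\<lambda>x. ennreal (d x))) (space N) = (\<integral>\<^sup>+x. ennreal (d x) * indicator (space N) x \<partial>N)"
    using d by (subst emeasure_density) auto
  also have "\<dots> = (\<integral>\<^sup>+x. ennreal (d x) \<partial>N)"
    by (rule nn_integral_cong) (simp add: indicator_def)
  also have "\<dots> = 1"
    using \<open>integrable N d\<close> d by (subst nn_integral_eq_integral) auto
  finally show "emeasure (density N (\<lambda>x. ennreal (d x))) (space (density N (\<lambda>x. ennreal (d x)))) = 1"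
    by simp
qed

lemma integral_mult_prob_density:
  assumes "prob_density N d" "h \<in> borel_measurable N"
  shows "(\<integral>x. d x * h x \<partial>N) = (\<integral>x. h x \<partial>density N (\<lambda>x. ennreal (d x)))"
  using assms unfolding prob_density_def by (subst integral_density) auto

lemma integral_indicator_mult_prob_density:
  assumes d: "prob_density N d" and g[measurable]: "g \<in> borel_measurable N" and S[measurable]: "S \<in> sets borel"
  shows "(\<integral>x. indicator {x. g x \<in> S} x * d x \<partial>N) = measure (distr (density N (\<lambda>x. ennreal (d x))) borel g) S"
proof -
  define P where "P = density N (\<lambda>x. ennreal (d x))"
  interpret P: prob_space P
    unfolding P_def using d by (rule prob_space_density_prob_density)
  interpret \<mu>: prob_space "distr P borel g"
    by (rule P.prob_space_distr) (simp add: P_def)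
  have "(\<lambda>x. indicator {x. g x \<in> S} x :: real) = (\<lambda>x. indicator S (g x))"
    by (auto simp: indicator_def)
  then have "(\<integral>x. indicator {x. g x \<in> S} x * d x \<partial>N) = (\<integral>x. indicator S (g x) \<partial>P)"
    using integral_mult_prob_density[OF d, of "\<lambda>x. indicator S (g x)"] by (simp add: mult.commute P_def)
  also have "\<dots> = (\<integral>s. indicator S s \<partial>distr P borel g)"
    by (rule integral_distr[symmetric]) (simp_all add: P_def)
  also have "\<dots> = measure (distr P borel g) S"
    by (simp add: \<mu>.emeasure_eq_measure)
  finally show ?thesis unfolding P_def .
qed

lemma integral_cont_r_prob_density:
  assumes \<phi>: "prob_density MT (\<lambda>\<theta>. \<phi> \<theta> y)" and f[measurable]: "(\<lambda>\<theta>. f \<theta> y) \<in> borel_measurable MT"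
    and x: "0 \<le> x" "x \<le> 1"
  shows "(\<integral>\<theta>t. \<phi> \<theta>t y * cont_r MT \<phi> f x \<theta>t y \<partial>MT) = x"
proof -
  define P where "P = density MT (\<lambda>\<theta>. ennreal (\<phi> \<theta> y))"
  define \<mu> where "\<mu> = distr P borel (\<lambda>\<theta>. f \<theta> y)"
  interpret P: prob_space P
    unfolding P_def using \<phi> by (rule prob_space_density_prob_density)
  have fP: "(\<lambda>\<theta>. f \<theta> y) \<in> borel_measurable P"
    by (simp add: P_def)
  interpret \<mu>: real_distribution \<mu>
    unfolding \<mu>_def using fP by simp
  have C: "cont_C MT \<phi> f s y = cdf \<mu> s" for s
    using integral_indicator_mult_prob_density[OF \<phi> f, of "{..s}"]
    unfolding cont_C_def cdf_def \<mu>_def P_def by simp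
  have D: "cont_D MT \<phi> f s y = measure \<mu> {s}" for s
    using integral_indicator_mult_prob_density[OF \<phi> f, of "{s}"]
    unfolding cont_D_def \<mu>_def P_def by simp
  have r: "cont_r MT \<phi> f x \<theta>t y = interval_uniform_cdf (measure \<mu> {..<f \<theta>t y}) (cdf \<mu> (f \<theta>t y)) x" for \<theta>t
    unfolding cont_r_def C D
    by (subst measure_uniform_unit_interval_le) (simp_all add: \<mu>.cdf_eq_measure_lessThan_add)
  have H: "(\<lambda>s. interval_uniform_cdf (measure \<mu> {..<s}) (cdf \<mu> s) x) \<in> borel_measurable borel"
    by (intro borel_measurable_interval_uniform_cdf \<mu>.borel_measurable_measure_lessThan \<mu>.borel_measurable_cdf)
  have "(\<integral>\<theta>t. \<phi> \<theta>t y * cont_r MT \<phi> f x \<theta>t y \<partial>MT)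
      = (\<integral>\<theta>t. interval_uniform_cdf (measure \<mu> {..<f \<theta>t y}) (cdf \<mu> (f \<theta>t y)) x \<partial>P)"
    unfolding r P_def using measurable_compose[OF f H] by (rule integral_mult_prob_density[OF \<phi>])
  also have "\<dots> = (\<integral>s. interval_uniform_cdf (measure \<mu> {..<s}) (cdf \<mu> s) x \<partial>\<mu>)"
    using fP H unfolding \<mu>_def by (rule integral_distr[symmetric])
  also have "\<dots> = x"
    using x by (rule \<mu>.integral_interval_uniform_cdf)
  finally show ?thesis .
qed

lemma integral_sbc_R_prob_density:
  assumes \<phi>: "prob_density MT (\<lambda>\<theta>. \<phi> \<theta> y)" and f[measurable]: "(\<lambda>\<theta>. f \<theta> y) \<in> borel_measurable MT"
    and i: "i < M"
  shows "(\<integral>\<theta>t. \<phi> \<theta>t y * sbc_R MT \<phi> f M i \<theta>t y \<partial>MT) = (real i + 1) / (M + 1)"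
proof -
  define P where "P = density MT (\<lambda>\<theta>. ennreal (\<phi> \<theta> y))"
  interpret P: prob_space P
    unfolding P_def using \<phi> by (rule prob_space_density_prob_density)
  interpret PiM: prob_space "PiM {..<M} (\<lambda>_. P)"
    by (rule prob_space_PiM) (rule P.prob_space_axioms)
  have fP: "(\<lambda>\<theta>. f \<theta> y) \<in> borel_measurable P"
    by (simp add: P_def)
  have R: "sbc_R MT \<phi> f M i \<theta>t y = (\<integral>\<omega>. randomized_rank_cdf (card {m\<in>{..<M}. f (\<omega> m) y < f \<theta>t y})
      (card {m\<in>{..<M}. f (\<omega> m) y = f \<theta>t y}) i \<partial>PiM {..<M} (\<lambda>_. P))" for \<theta>t
    unfolding sbc_R_def sample_measure_def N_less_def N_equals_def randomized_rank_cdf_def P_def ..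
  have "(\<lambda>\<theta>t. sbc_R MT \<phi> f M i \<theta>t y) \<in> borel_measurable P"
    unfolding R
    by (rule PiM.borel_measurable_lebesgue_integral)
      (rule borel_measurable_randomized_rank_cdf_samples[OF fP])
  then have "(\<integral>\<theta>t. \<phi> \<theta>t y * sbc_R MT \<phi> f M i \<theta>t y \<partial>MT) = (\<integral>\<theta>t. sbc_R MT \<phi> f M i \<theta>t y \<partial>P)"
    unfolding P_def by (intro integral_mult_prob_density[OF \<phi>]) simp
  also have "\<dots> = (real i + 1) / (M + 1)"
    unfolding R by (rule P.integral_randomized_rank_cdf_samples[OF i fP])
  finally show ?thesis .
qed

lemma prob_density_post:
  assumes [measurable]: "prior \<in> borel_measurable MT" "obs y \<in> borel_measurable MT"
    and nonneg: "\<forall>\<theta>\<in>space MT. 0 \<le> prior \<theta>" "\<forall>\<theta>\<in>space MT. 0 \<le> obs y \<theta>"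
    and marg: "marg MT prior obs y \<noteq> 0"
  shows "prob_density MT (\<lambda>\<theta>. post MT prior obs \<theta> y)"
proof -
  have "0 \<le> marg MT prior obs y"
    unfolding marg_def using nonneg by (intro integral_nonneg_AE) auto
  with marg have "0 < marg MT prior obs y" by simp
  then show ?thesis
    using nonneg unfolding prob_density_def post_def by (auto simp: marg_def)
qed

lemma integral_mult_eq_const:
  assumes "(\<integral>y. m y \<partial>N) = (1::real)" "\<And>y. y \<in> space N \<Longrightarrow> m y \<noteq> 0 \<Longrightarrow> F y = c"
  shows "(\<integral>y. F y * m y \<partial>N) = c"
proof -
  have "(\<integral>y. F y * m y \<partial>N) = (\<integral>y. c * m y \<partial>N)"
    using assms(2) by (intro Bochner_Integration.integral_cong) auto
  then show ?thesis using assms(1) by simp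
qed

lemma nn_integral_obs_prior_eq_1:
  assumes "sigma_finite_measure MT" "sigma_finite_measure MY"
    and prior[measurable]: "prior \<in> borel_measurable MT"
    and prior_nonneg: "\<forall>\<theta>\<in>space MT. 0 \<le> prior \<theta>" and prior_1: "(\<integral>\<theta>. prior \<theta> \<partial>MT) = 1"
    and obs[measurable]: "(\<lambda>(\<theta>, y). obs y \<theta>) \<in> borel_measurable (MT \<Otimes>\<^sub>M MY)"
    and obs_nonneg: "\<forall>\<theta>\<in>space MT. \<forall>y\<in>space MY. 0 \<le> obs y \<theta>"
    and obs_1: "\<forall>\<theta>\<in>space MT. (\<integral>y. obs y \<theta> \<partial>MY) = 1"
  shows "(\<integral>\<^sup>+y. (\<integral>\<^sup>+\<theta>. ennreal (obs y \<theta> * prior \<theta>) \<partial>MT) \<partial>MY) = 1"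
proof -
  interpret pair_sigma_finite MT MY
    using assms(1,2) by (rule pair_sigma_finite.intro)
  have "(\<integral>\<^sup>+y. (\<integral>\<^sup>+\<theta>. ennreal (obs y \<theta> * prior \<theta>) \<partial>MT) \<partial>MY)
      = (\<integral>\<^sup>+\<theta>. (\<integral>\<^sup>+y. ennreal (obs y \<theta> * prior \<theta>) \<partial>MY) \<partial>MT)"
    by (rule Fubini') (simp add: split_beta')
  also have "\<dots> = (\<integral>\<^sup>+\<theta>. ennreal (prior \<theta>) \<partial>MT)"
  proof (rule nn_integral_cong)
    fix \<theta> assume \<theta>: "\<theta> \<in> space MT"
    have [measurable]: "(\<lambda>y. obs y \<theta>) \<in> borel_measurable MY"
      using measurable_Pair2[OF obs \<theta>] by simp
    have "integrable MY (\<lambda>y. obs y \<theta>)"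
      using obs_1 \<theta> not_integrable_integral_eq by force
    then have "(\<integral>\<^sup>+y. ennreal (obs y \<theta>) \<partial>MY) = 1"
      using obs_nonneg obs_1 \<theta> by (subst nn_integral_eq_integral) auto
    then show "(\<integral>\<^sup>+y. ennreal (obs y \<theta> * prior \<theta>) \<partial>MY) = ennreal (prior \<theta>)"
      using prior_nonneg obs_nonneg \<theta>
      by (simp add: ennreal_mult' mult.commute nn_integral_cmult)
  qed
  also have "\<dots> = 1"
    using prior_nonneg prior_1 not_integrable_integral_eq
    by (subst nn_integral_eq_integral) force+
  finally show ?thesis .
qed

lemma integral_marg_eq_1:
  assumes MT: "sigma_finite_measure MT" and MY: "sigma_finite_measure MY"
    and prior[measurable]: "prior \<in> borel_measurable MT"
    and prior_nonneg: "\<forall>\<theta>\<in>space MT. 0 \<le> prior \<theta>" and prior_1: "(\<integral>\<theta>. prior \<theta> \<partial>MT) = 1"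
    and obs[measurable]: "(\<lambda>(\<theta>, y). obs y \<theta>) \<in> borel_measurable (MT \<Otimes>\<^sub>M MY)"
    and obs_nonneg: "\<forall>\<theta>\<in>space MT. \<forall>y\<in>space MY. 0 \<le> obs y \<theta>"
    and obs_1: "\<forall>\<theta>\<in>space MT. (\<integral>y. obs y \<theta> \<partial>MY) = 1"
  shows "(\<integral>y. marg MT prior obs y \<partial>MY) = 1"
proof -
  interpret MT: sigma_finite_measure MT by (rule MT)
  define F where "F y = (\<integral>\<^sup>+\<theta>. ennreal (obs y \<theta> * prior \<theta>) \<partial>MT)" for y
  have obs_swap[measurable]: "(\<lambda>(y, \<theta>). obs y \<theta> * prior \<theta>) \<in> borel_measurable (MY \<Otimes>\<^sub>M MT)"
    using measurable_compose[OF measurable_pair_swap' obs] by (simp add: split_beta')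
  have F1: "(\<integral>\<^sup>+y. F y \<partial>MY) = 1"
    unfolding F_def by (rule nn_integral_obs_prior_eq_1[OF assms])
  have "AE y in MY. F y \<noteq> \<infinity>"
    using F1 unfolding F_def
    by (intro nn_integral_PInf_AE MT.borel_measurable_nn_integral) (auto simp: split_beta')
  moreover have "marg MT prior obs y = enn2real (F y)" if y: "y \<in> space MY" for y
  proof -
    have [measurable]: "obs y \<in> borel_measurable MT"
      using measurable_Pair1[OF obs y] by simp
    show ?thesis
      unfolding marg_def F_def using prior_nonneg obs_nonneg y
      by (intro integral_eq_nn_integral) auto
  qed
  ultimately have "(\<integral>\<^sup>+y. ennreal (marg MT prior obs y) \<partial>MY) = 1"
    using F1 by (subst nn_integral_cong_AE[where v=F]) (auto simp: ennreal_enn2real_if AE_space)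
  moreover have "marg MT prior obs \<in> borel_measurable MY"
    unfolding marg_def by (rule MT.borel_measurable_lebesgue_integral) (simp add: split_beta')
  moreover have "0 \<le> marg MT prior obs y" if "y \<in> space MY" for y
    using measurable_Pair1[OF obs that] prior_nonneg obs_nonneg that
    unfolding marg_def by (intro integral_nonneg_AE) auto
  ultimately show ?thesis
    by (subst integral_eq_nn_integral) auto
qed

theorem mainTheorem5:
  fixes MT :: "'p measure" and MY :: "'y measure"
    and prior :: "'p \<Rightarrow> real" and obs :: "'y \<Rightarrow> 'p \<Rightarrow> real"
    and f :: "'p \<Rightarrow> 'y \<Rightarrow> real" and M :: nat
  assumes "sigma_finite_measure MT" and "sigma_finite_measure MY"
    and "prior \<in> borel_measurable MT"
    and "\<forall>\<theta>\<in>space MT. 0 \<le> prior \<theta>"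
    and "(\<integral>\<theta>. prior \<theta> \<partial>MT) = 1"
    and "(\<lambda>(\<theta>, y). obs y \<theta>) \<in> borel_measurable (MT \<Otimes>\<^sub>M MY)"
    and "\<forall>\<theta>\<in>space MT. \<forall>y\<in>space MY. 0 \<le> obs y \<theta>"
    and "\<forall>\<theta>\<in>space MT. (\<integral>y. obs y \<theta> \<partial>MY) = 1"
    and "(\<lambda>(\<theta>, y). f \<theta> y) \<in> borel_measurable (MT \<Otimes>\<^sub>M MY)"
  shows "passes_cont_SBC MT MY prior obs (post MT prior obs) f
       \<and> passes_M_SBC MT MY prior obs (post MT prior obs) f M"
proof -
  have marg_1: "(\<integral>y. marg MT prior obs y \<partial>MY) = 1"
    using assms(1-8) by (rule integral_marg_eq_1)
  have post: "prob_density MT (\<lambda>\<theta>. post MT prior obs \<theta> y)"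
    if "y \<in> space MY" "marg MT prior obs y \<noteq> 0" for y
    using measurable_Pair1[OF assms(6) that(1)] assms(3,4,7) that
    by (intro prob_density_post) auto
  have f_y: "(\<lambda>\<theta>. f \<theta> y) \<in> borel_measurable MT" if "y \<in> space MY" for y
    using measurable_Pair1[OF assms(9) that] by simp
  have cont: "(\<integral>y. cont_q MT prior obs (post MT prior obs) f x y * marg MT prior obs y \<partial>MY) = x"
    if "x \<in> {0..1}" for x
    unfolding cont_q_def using that integral_cont_r_prob_density[where \<phi>="post MT prior obs" and f=f, OF post f_y]
    by (intro integral_mult_eq_const[OF marg_1]) auto
  have samples: "(\<integral>y. sbc_Q MT prior obs (post MT prior obs) f M i y * marg MT prior obs y \<partial>MY)
      = real (i + 1) / real (M + 1)" if "i < M" for i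
    unfolding sbc_Q_def using that integral_sbc_R_prob_density[where \<phi>="post MT prior obs" and f=f, OF post f_y]
    by (intro integral_mult_eq_const[OF marg_1]) auto
  show ?thesis
    unfolding passes_cont_SBC_def passes_M_SBC_def using cont samples by blast
qed

end
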